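(* Let $X \subseteq A$. For all subsets $S', S'' \subseteq S$ the equilibria operator $\Psi_X$ satisfies: (a) (idempotency) $\Psi_X(\Psi_X(S')) = \Psi_X(S')$; (b) (upper-continuity) $\Psi_X(S' \cup S'') = \Psi_X(S') \cup \Psi_X(S'')$; (c) (monotony) $S' \subseteq S'' \implies \Psi_X(S') \subseteq \Psi_X(S'')$.
   Context: Let $A$ be a finite set of agents. For each $a \in A$ let $S_a$ be a nonempty finite set, and let $S = \prod_{a \in A} S_a$ be the set of states. For each $a \in A$ let $\to_a \subseteq S \times S$ be a relation that is either empty or left-total (every state has at least one $\to_a$-successor), such that whenever $s \to_a s'$, either $s = s'$ or $s$ and $s'$ differ only in the $a$-component. For $X \subseteq A$ let $\to_X = \bigcup_{a \in X} \to_a$ and let $\to_X^*$ be its reflexive-transitive closure. For $S' \subseteq S$, the orbit operator is $\Omega_X(S') = \{ s' \in S : \exists s \in S',\ s \to_X^* s'\}$, and the equilibria operator is $\Psi_X(S') = \{ s \in \Omega_X(S') : \forall s' \in S,\ s \to_X^* s' \implies s' \to_X^* s \}$. *)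

theory Defs
  imports "HOL-Library.FuncSet"
begin

definition states :: "'a set \<Rightarrow> ('a \<Rightarrow> 'b set) \<Rightarrow> ('a \<Rightarrow> 'b) set" where
  "states A Sa = PiE A Sa"

definition game_system ::
  "'a set \<Rightarrow> ('a \<Rightarrow> 'b set) \<Rightarrow> ('a \<Rightarrow> ('a \<Rightarrow> 'b) rel) \<Rightarrow> bool" where
  "game_system A Sa step \<longleftrightarrow>
     finite A \<and>
     (\<forall>a\<in>A. Sa a \<noteq> {} \<and> finite (Sa a)) \<and>
     (\<forall>a\<in>A. step a \<subseteq> states A Sa \<times> states A Sa) \<and>
     (\<forall>a\<in>A. step a = {} \<or> (\<forall>s\<in>states A Sa. \<exists>s'. (s, s') \<in> step a)) \<and>
     (\<forall>a\<in>A. \<forall>(s, s')\<in>step a. s = s' \<or> (\<forall>b\<in>A. b \<noteq> a \<longrightarrow> s b = s' b))"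

definition stepX :: "('a \<Rightarrow> ('a \<Rightarrow> 'b) rel) \<Rightarrow> 'a set \<Rightarrow> ('a \<Rightarrow> 'b) rel" where
  "stepX step X = (\<Union>a\<in>X. step a)"

definition orbit ::
  "'a set \<Rightarrow> ('a \<Rightarrow> 'b set) \<Rightarrow> ('a \<Rightarrow> ('a \<Rightarrow> 'b) rel) \<Rightarrow> 'a set \<Rightarrow> ('a \<Rightarrow> 'b) set \<Rightarrow> ('a \<Rightarrow> 'b) set" where
  "orbit A Sa step X S' = {s' \<in> states A Sa. \<exists>s\<in>S'. (s, s') \<in> (stepX step X)\<^sup>*}"

definition equilibria ::
  "'a set \<Rightarrow> ('a \<Rightarrow> 'b set) \<Rightarrow> ('a \<Rightarrow> ('a \<Rightarrow> 'b) rel) \<Rightarrow> 'a set \<Rightarrow> ('a \<Rightarrow> 'b) set \<Rightarrow> ('a \<Rightarrow> 'b) set" where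
  "equilibria A Sa step X S' =
     {s \<in> orbit A Sa step X S'. \<forall>s'\<in>states A Sa.
        (s, s') \<in> (stepX step X)\<^sup>* \<longrightarrow> (s', s) \<in> (stepX step X)\<^sup>*}"

end

theory Submission
  imports Defs
begin

text \<open>An equilibrium is a reachable state that is recurrent, i.e. can return from every state it
  reaches. Recurrence does not depend on S', so the three properties reduce to the orbit
  operator being a monotone, additive closure operator on the state space.\<close>

definition recurrent ::
  "'a set \<Rightarrow> ('a \<Rightarrow> 'b set) \<Rightarrow> ('a \<Rightarrow> ('a \<Rightarrow> 'b) rel) \<Rightarrow> 'a set \<Rightarrow> ('a \<Rightarrow> 'b) set" where
  "recurrent A Sa step X = {s. \<forall>s'\<in>states A Sa.
     (s, s') \<in> (stepX step X)\<^sup>* \<longrightarrow> (s', s) \<in> (stepX step X)\<^sup>*}"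

lemma equilibria_eq_orbit_Int_recurrent:
  "equilibria A Sa step X S' = orbit A Sa step X S' \<inter> recurrent A Sa step X"
  unfolding equilibria_def recurrent_def by blast

lemma orbit_subset_states: "orbit A Sa step X S' \<subseteq> states A Sa"
  unfolding orbit_def by blast

lemma Int_states_subset_orbit: "S' \<inter> states A Sa \<subseteq> orbit A Sa step X S'"
  unfolding orbit_def by blast

lemma orbit_mono: "S' \<subseteq> S'' \<Longrightarrow> orbit A Sa step X S' \<subseteq> orbit A Sa step X S''"
  unfolding orbit_def by blast

lemma orbit_Un:
  "orbit A Sa step X (S' \<union> S'') = orbit A Sa step X S' \<union> orbit A Sa step X S''"
  unfolding orbit_def by blast

lemma orbit_orbit: "orbit A Sa step X (orbit A Sa step X S') = orbit A Sa step X S'"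
  unfolding orbit_def by (blast intro: rtrancl_trans)

lemma equilibria_idem:
  "equilibria A Sa step X (equilibria A Sa step X S') = equilibria A Sa step X S'"
proof
  let ?\<Omega> = "orbit A Sa step X" and ?R = "recurrent A Sa step X"
  have "?\<Omega> (?\<Omega> S' \<inter> ?R) \<subseteq> ?\<Omega> S'"
    using orbit_mono[of "?\<Omega> S' \<inter> ?R" "?\<Omega> S'"] orbit_orbit by blast
  then show "equilibria A Sa step X (equilibria A Sa step X S') \<subseteq> equilibria A Sa step X S'"
    by (auto simp: equilibria_eq_orbit_Int_recurrent)
  have "?\<Omega> S' \<inter> ?R \<subseteq> ?\<Omega> (?\<Omega> S' \<inter> ?R)"
    using Int_states_subset_orbit[of "?\<Omega> S' \<inter> ?R"] orbit_subset_states by blast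
  then show "equilibria A Sa step X S' \<subseteq> equilibria A Sa step X (equilibria A Sa step X S')"
    by (auto simp: equilibria_eq_orbit_Int_recurrent)
qed

lemma equilibria_Un:
  "equilibria A Sa step X (S' \<union> S'') = equilibria A Sa step X S' \<union> equilibria A Sa step X S''"
  by (auto simp: equilibria_eq_orbit_Int_recurrent orbit_Un)

lemma equilibria_mono:
  "S' \<subseteq> S'' \<Longrightarrow> equilibria A Sa step X S' \<subseteq> equilibria A Sa step X S''"
  unfolding equilibria_eq_orbit_Int_recurrent by (drule orbit_mono) blast

theorem proposition1:
  assumes "game_system A Sa step"
    and "X \<subseteq> A"
    and "S' \<subseteq> states A Sa" and "S'' \<subseteq> states A Sa"
  shows "(equilibria A Sa step X (equilibria A Sa step X S') = equilibria A Sa step X S') \<and>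
         (equilibria A Sa step X (S' \<union> S'') = equilibria A Sa step X S' \<union> equilibria A Sa step X S'') \<and>
         (S' \<subseteq> S'' \<longrightarrow> equilibria A Sa step X S' \<subseteq> equilibria A Sa step X S'')"
  by (intro conjI impI equilibria_idem equilibria_Un equilibria_mono)

end
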